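(* Let $(M,(I,O))$ be an oriented map with root $h_0$ and backward function $\beta$. Then $(M,(I,O))$ is left-connected if and only if for every half-edge $h$ there exists an integer $q>0$ such that $\beta^q(h)=h_0$.
   Context: A map is $M=(H,\sigma,\alpha)$ with $H$ finite, $\alpha$ a fixed-point-free involution, $\sigma$ a permutation, $\langle\sigma,\alpha\rangle$ transitive, with root $h_0\in H$; $\phi=\sigma\alpha$ (i.e. $\phi(h)=\sigma(\alpha(h))$) is the face-permutation. An orientation is a partition $H=I\uplus O$ with $\alpha(I)=O$. The backward function is $\beta(h)=\sigma(h)$ if $h\in O$ and $\beta(h)=\phi(h)$ if $h\in I$. A left-path is a sequence $h_1,\dots,h_k$ of half-edges in $I$ such that for each $j=1,\dots,k$ there is an integer $q_j>0$ with $h_{j-1}=\sigma^{q_j}(\alpha(h_j))$ and $\sigma^p(\alpha(h_j))\in O$ for all $p=0,\dots,q_j-1$. The oriented map is left-connected if every half-edge in $I$ is the last element of some left-path. *)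

theory Defs
  imports "HOL-Combinatorics.Permutations"
begin

definition is_map :: "'a set \<Rightarrow> ('a \<Rightarrow> 'a) \<Rightarrow> ('a \<Rightarrow> 'a) \<Rightarrow> 'a \<Rightarrow> bool" where
  "is_map H \<sigma> \<alpha> h0 \<longleftrightarrow>
     finite H \<and> h0 \<in> H \<and> \<sigma> permutes H \<and> \<alpha> permutes H \<and>
     (\<forall>h\<in>H. \<alpha> (\<alpha> h) = h \<and> \<alpha> h \<noteq> h) \<and>
     (\<forall>x\<in>H. \<forall>y\<in>H. (x, y) \<in> ({(u, \<sigma> u) | u. u \<in> H} \<union> {(u, \<alpha> u) | u. u \<in> H})\<^sup>*)"

definition face_perm :: "('a \<Rightarrow> 'a) \<Rightarrow> ('a \<Rightarrow> 'a) \<Rightarrow> 'a \<Rightarrow> 'a" where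
  "face_perm \<sigma> \<alpha> = \<sigma> \<circ> \<alpha>"

definition is_orientation :: "'a set \<Rightarrow> ('a \<Rightarrow> 'a) \<Rightarrow> 'a set \<Rightarrow> 'a set \<Rightarrow> bool" where
  "is_orientation H \<alpha> Iset Oset \<longleftrightarrow> Iset \<union> Oset = H \<and> Iset \<inter> Oset = {} \<and> \<alpha> ` Iset = Oset"

definition backward :: "('a \<Rightarrow> 'a) \<Rightarrow> ('a \<Rightarrow> 'a) \<Rightarrow> 'a set \<Rightarrow> 'a \<Rightarrow> 'a" where
  "backward \<sigma> \<alpha> Oset h = (if h \<in> Oset then \<sigma> h else face_perm \<sigma> \<alpha> h)"

definition left_path :: "('a \<Rightarrow> 'a) \<Rightarrow> ('a \<Rightarrow> 'a) \<Rightarrow> 'a set \<Rightarrow> 'a set \<Rightarrow> 'a \<Rightarrow> 'a list \<Rightarrow> bool" where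
  "left_path \<sigma> \<alpha> Iset Oset h0 hs \<longleftrightarrow>
     set hs \<subseteq> Iset \<and>
     (\<forall>j < length hs.
        (let prev = (if j = 0 then h0 else hs ! (j - 1)) in
         \<exists>q > 0. prev = (\<sigma> ^^ q) (\<alpha> (hs ! j)) \<and>
                 (\<forall>p < q. (\<sigma> ^^ p) (\<alpha> (hs ! j)) \<in> Oset)))"

definition left_connected :: "('a \<Rightarrow> 'a) \<Rightarrow> ('a \<Rightarrow> 'a) \<Rightarrow> 'a set \<Rightarrow> 'a set \<Rightarrow> 'a \<Rightarrow> bool" where
  "left_connected \<sigma> \<alpha> Iset Oset h0 \<longleftrightarrow>
     (\<forall>h \<in> Iset. \<exists>hs. hs \<noteq> [] \<and> left_path \<sigma> \<alpha> Iset Oset h0 hs \<and> last hs = h)"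

end

theory Submission
  imports Defs
begin

text \<open>Two observations carry the proof. First, \<open>\<beta> \<circ> \<alpha> = \<beta>\<close> on \<open>H\<close>, since both
  sides are \<open>\<sigma>\<close> of the outgoing half-edge of the edge. Second, for \<open>h \<in> I\<close> the
  left-path condition for a step from \<open>h\<close> back to \<open>g\<close> says exactly that the
  \<open>\<beta>\<close>-orbit of \<open>\<alpha> h\<close> stays in \<open>O\<close> until it hits \<open>g\<close>, where \<open>\<beta>\<close> acts as \<open>\<sigma>\<close>.
  Hence a left-path ending in \<open>h\<close> concatenates to a \<open>\<beta>\<close>-orbit from \<open>h\<close> to the root.
  Conversely, a \<open>\<beta>\<close>-orbit from \<open>h\<close> to the root is cut at its visits to \<open>I\<close> into
  left-path steps, which is organised as an induction backwards along the orbit.\<close>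

lemma backward_funpow_eq_sigma_funpow:
  assumes "\<forall>p<q. (\<sigma> ^^ p) h \<in> Oset"
  shows "(backward \<sigma> \<alpha> Oset ^^ q) h = (\<sigma> ^^ q) h"
  using assms by (induction q) (simp_all add: backward_def)

lemma sigma_run_iff_backward_run:
  "(\<forall>p<q. (\<sigma> ^^ p) h \<in> Oset) \<longleftrightarrow> (\<forall>p<q. (backward \<sigma> \<alpha> Oset ^^ p) h \<in> Oset)"
  by (induction q) (auto simp: less_Suc_eq backward_funpow_eq_sigma_funpow)

definition left_step :: "('a \<Rightarrow> 'a) \<Rightarrow> ('a \<Rightarrow> 'a) \<Rightarrow> 'a set \<Rightarrow> 'a \<Rightarrow> 'a \<Rightarrow> bool" where
  "left_step \<sigma> \<alpha> Oset g h \<longleftrightarrow> (\<exists>q>0. g = (\<sigma> ^^ q) (\<alpha> h) \<and> (\<forall>p<q. (\<sigma> ^^ p) (\<alpha> h) \<in> Oset))"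

lemma left_step_iff_backward_run:
  "left_step \<sigma> \<alpha> Oset g h \<longleftrightarrow>
   (\<exists>q>0. (backward \<sigma> \<alpha> Oset ^^ q) (\<alpha> h) = g \<and> (\<forall>p<q. (backward \<sigma> \<alpha> Oset ^^ p) (\<alpha> h) \<in> Oset))"
  by (auto simp: left_step_def backward_funpow_eq_sigma_funpow sigma_run_iff_backward_run[symmetric])

lemma left_path_snoc:
  "left_path \<sigma> \<alpha> Iset Oset h0 (hs @ [h]) \<longleftrightarrow>
   left_path \<sigma> \<alpha> Iset Oset h0 hs \<and> h \<in> Iset \<and>
   left_step \<sigma> \<alpha> Oset (if hs = [] then h0 else last hs) h"
proof -
  have "(\<forall>j < length (hs @ [h]). P j) \<longleftrightarrow> (\<forall>j < length hs. P j) \<and> P (length hs)" for P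
    by (auto simp: less_Suc_eq)
  then show ?thesis
    unfolding left_path_def left_step_def
    by (auto simp: nth_append last_conv_nth nth_Cons' split: if_splits)
qed

definition left_path_ends :: "('a \<Rightarrow> 'a) \<Rightarrow> ('a \<Rightarrow> 'a) \<Rightarrow> 'a set \<Rightarrow> 'a set \<Rightarrow> 'a \<Rightarrow> 'a set" where
  "left_path_ends \<sigma> \<alpha> Iset Oset h0 = {last hs | hs. hs \<noteq> [] \<and> left_path \<sigma> \<alpha> Iset Oset h0 hs}"

lemma left_connected_iff_subset_left_path_ends:
  "left_connected \<sigma> \<alpha> Iset Oset h0 \<longleftrightarrow> Iset \<subseteq> left_path_ends \<sigma> \<alpha> Iset Oset h0"
  unfolding left_connected_def left_path_ends_def by auto

lemma left_path_ends_extend: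
  assumes "h \<in> Iset" "left_step \<sigma> \<alpha> Oset g h"
    and "g \<in> insert h0 (left_path_ends \<sigma> \<alpha> Iset Oset h0)"
  shows "h \<in> left_path_ends \<sigma> \<alpha> Iset Oset h0"
proof -
  have "left_path \<sigma> \<alpha> Iset Oset h0 []"
    by (simp add: left_path_def)
  then obtain hs where "left_path \<sigma> \<alpha> Iset Oset h0 hs" "g = (if hs = [] then h0 else last hs)"
    using assms(3) unfolding left_path_ends_def by fastforce
  then have "left_path \<sigma> \<alpha> Iset Oset h0 (hs @ [h])"
    using assms(1,2) by (simp add: left_path_snoc)
  then show ?thesis
    unfolding left_path_ends_def by (intro CollectI exI[of _ "hs @ [h]"]) simp
qed

locale oriented_map =
  fixes H :: "'a set" and \<sigma> \<alpha> :: "'a \<Rightarrow> 'a" and h0 :: 'a and Iset Oset :: "'a set"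
  assumes map: "is_map H \<sigma> \<alpha> h0"
    and orientation: "is_orientation H \<alpha> Iset Oset"
begin

abbreviation \<beta> :: "'a \<Rightarrow> 'a" where
  "\<beta> \<equiv> backward \<sigma> \<alpha> Oset"

lemma Iset_Un_Oset: "Iset \<union> Oset = H"
  and Iset_Int_Oset: "Iset \<inter> Oset = {}"
  and alpha_Iset: "\<alpha> ` Iset = Oset"
  using orientation by (simp_all add: is_orientation_def)

lemma alpha_alpha: "h \<in> H \<Longrightarrow> \<alpha> (\<alpha> h) = h"
  using map by (simp add: is_map_def)

lemma alpha_in_H: "h \<in> H \<Longrightarrow> \<alpha> h \<in> H"
  using map by (simp add: is_map_def permutes_in_image)

lemma backward_in_H: "h \<in> H \<Longrightarrow> \<beta> h \<in> H"
  using map by (simp add: is_map_def backward_def face_perm_def permutes_in_image)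

lemma alpha_in_Oset_iff:
  assumes "h \<in> H"
  shows "\<alpha> h \<in> Oset \<longleftrightarrow> h \<in> Iset"
proof
  assume "\<alpha> h \<in> Oset"
  then obtain i where "i \<in> Iset" "\<alpha> h = \<alpha> i"
    using alpha_Iset by blast
  moreover have "i \<in> H"
    using \<open>i \<in> Iset\<close> Iset_Un_Oset by blast
  ultimately show "h \<in> Iset"
    using alpha_alpha assms by metis
qed (use alpha_Iset in blast)

lemma backward_alpha: "h \<in> H \<Longrightarrow> \<beta> (\<alpha> h) = \<beta> h"
  using alpha_in_Oset_iff alpha_alpha Iset_Un_Oset Iset_Int_Oset
  by (auto simp: backward_def face_perm_def)

lemma funpow_backward_alpha: "h \<in> H \<Longrightarrow> 0 < q \<Longrightarrow> (\<beta> ^^ q) (\<alpha> h) = (\<beta> ^^ q) h"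
  by (cases q) (simp_all add: funpow_Suc_right backward_alpha del: funpow.simps)

lemma left_step_backward_reaches:
  assumes "h \<in> H" "left_step \<sigma> \<alpha> Oset g h"
  shows "\<exists>q>0. (\<beta> ^^ q) h = g"
  using assms by (auto simp: left_step_iff_backward_run funpow_backward_alpha)

lemma left_path_last_backward_reaches_root:
  "left_path \<sigma> \<alpha> Iset Oset h0 hs \<Longrightarrow> hs \<noteq> [] \<Longrightarrow> \<exists>q>0. (\<beta> ^^ q) (last hs) = h0"
proof (induction hs rule: rev_induct)
  case (snoc h hs)
  then have "left_step \<sigma> \<alpha> Oset (if hs = [] then h0 else last hs) h" "h \<in> H"
    using Iset_Un_Oset by (auto simp: left_path_snoc)
  then obtain q where q: "0 < q" "(\<beta> ^^ q) h = (if hs = [] then h0 else last hs)"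
    using left_step_backward_reaches by blast
  show ?case
  proof (cases "hs = []")
    case True
    with q show ?thesis
      by (intro exI[of _ q]) simp
  next
    case False
    with snoc obtain r where "0 < r" "(\<beta> ^^ r) (last hs) = h0"
      by (auto simp: left_path_snoc)
    with q False show ?thesis
      by (intro exI[of _ "r + q"]) (simp add: funpow_add)
  qed
qed simp

lemma backward_reaches_root_if_left_connected:
  assumes "left_connected \<sigma> \<alpha> Iset Oset h0" "h \<in> H"
  shows "\<exists>q>0. (\<beta> ^^ q) h = h0"
proof -
  have reach: "\<exists>q>0. (\<beta> ^^ q) x = h0" if "x \<in> Iset" for x
  proof -
    have "\<exists>hs. hs \<noteq> [] \<and> left_path \<sigma> \<alpha> Iset Oset h0 hs \<and> last hs = x"
      using assms(1) that unfolding left_connected_def by (rule bspec)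
    then obtain hs where hs: "hs \<noteq> []" "left_path \<sigma> \<alpha> Iset Oset h0 hs" "last hs = x"
      by blast
    show ?thesis
      using left_path_last_backward_reaches_root[OF hs(2,1)] hs(3) by simp
  qed
  show ?thesis
  proof (cases "h \<in> Iset")
    case True
    then show ?thesis by (rule reach)
  next
    case False
    then have "h \<in> Oset"
      using assms(2) Iset_Un_Oset by blast
    then have "\<alpha> h \<in> Iset"
      using alpha_in_Oset_iff[OF alpha_in_H[OF assms(2)]] alpha_alpha[OF assms(2)] by simp
    then obtain q where "0 < q" "(\<beta> ^^ q) (\<alpha> h) = h0"
      using reach by blast
    with funpow_backward_alpha[OF assms(2)] show ?thesis
      by (intro exI[of _ q]) simp
  qed
qed

definition runs_to_left_path_end :: "'a \<Rightarrow> bool" where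
  "runs_to_left_path_end h \<longleftrightarrow>
     (\<exists>q. (\<beta> ^^ q) h \<in> insert h0 (left_path_ends \<sigma> \<alpha> Iset Oset h0) \<and>
          (\<forall>p<q. (\<beta> ^^ p) h \<in> Oset))"

lemma run_through_Oset_Suc:
  assumes "h \<in> Oset" "\<forall>p<q. (\<beta> ^^ p) (\<beta> h) \<in> Oset"
  shows "\<forall>p<Suc q. (\<beta> ^^ p) h \<in> Oset"
  using assms by (auto simp: less_Suc_eq_0_disj funpow_Suc_right simp del: funpow.simps)

lemma Iset_in_left_path_ends:
  assumes "h \<in> Iset" and "runs_to_left_path_end (\<beta> h)"
  shows "h \<in> left_path_ends \<sigma> \<alpha> Iset Oset h0"
proof -
  have hH: "h \<in> H"
    using assms(1) Iset_Un_Oset by blast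
  have ahO: "\<alpha> h \<in> Oset"
    using alpha_in_Oset_iff[OF hH] assms(1) by simp
  obtain q where q: "(\<beta> ^^ q) (\<beta> h) \<in> insert h0 (left_path_ends \<sigma> \<alpha> Iset Oset h0)"
      "\<forall>p<q. (\<beta> ^^ p) (\<beta> h) \<in> Oset"
    using assms(2) unfolding runs_to_left_path_end_def by blast
  have "\<forall>p<Suc q. (\<beta> ^^ p) (\<alpha> h) \<in> Oset"
    using run_through_Oset_Suc[OF ahO] q(2) backward_alpha[OF hH] by simp
  moreover have "(\<beta> ^^ Suc q) (\<alpha> h) = (\<beta> ^^ q) (\<beta> h)"
    using backward_alpha[OF hH] by (simp add: funpow_Suc_right del: funpow.simps)
  ultimately have "left_step \<sigma> \<alpha> Oset ((\<beta> ^^ q) (\<beta> h)) h"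
    unfolding left_step_iff_backward_run by (intro exI[of _ "Suc q"]) simp
  then show ?thesis
    by (rule left_path_ends_extend[OF assms(1) _ q(1)])
qed

lemma runs_to_left_path_end_backward:
  assumes "h \<in> H" and "runs_to_left_path_end (\<beta> h)"
  shows "runs_to_left_path_end h"
proof (cases "h \<in> Iset")
  case True
  then have "(\<beta> ^^ 0) h \<in> insert h0 (left_path_ends \<sigma> \<alpha> Iset Oset h0)"
    using Iset_in_left_path_ends assms(2) by simp
  then show ?thesis
    unfolding runs_to_left_path_end_def by blast
next
  case False
  then have "h \<in> Oset" using assms(1) Iset_Un_Oset by blast
  obtain q where "(\<beta> ^^ q) (\<beta> h) \<in> insert h0 (left_path_ends \<sigma> \<alpha> Iset Oset h0)"
      "\<forall>p<q. (\<beta> ^^ p) (\<beta> h) \<in> Oset"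
    using assms(2) unfolding runs_to_left_path_end_def by blast
  with run_through_Oset_Suc[OF \<open>h \<in> Oset\<close>] show ?thesis
    unfolding runs_to_left_path_end_def
    by (intro exI[of _ "Suc q"]) (simp add: funpow_Suc_right del: funpow.simps)
qed

lemma runs_to_left_path_end_if_backward_reaches_root:
  "h \<in> H \<Longrightarrow> (\<beta> ^^ n) h = h0 \<Longrightarrow> runs_to_left_path_end h"
proof (induction n arbitrary: h)
  case 0
  then show ?case
    unfolding runs_to_left_path_end_def by (intro exI[of _ 0]) simp
next
  case (Suc n)
  then show ?case
    using backward_in_H runs_to_left_path_end_backward
    by (simp add: funpow_Suc_right del: funpow.simps)
qed

lemma left_connected_if_backward_reaches_root:
  assumes "\<forall>h\<in>H. \<exists>q>0. (\<beta> ^^ q) h = h0"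
  shows "left_connected \<sigma> \<alpha> Iset Oset h0"
  unfolding left_connected_iff_subset_left_path_ends
proof
  fix h assume h: "h \<in> Iset"
  then have hH: "h \<in> H" using Iset_Un_Oset by blast
  then obtain n where "(\<beta> ^^ Suc n) h = h0"
    using assms gr0_implies_Suc by blast
  then have "(\<beta> ^^ n) (\<beta> h) = h0"
    by (simp add: funpow_Suc_right del: funpow.simps)
  then show "h \<in> left_path_ends \<sigma> \<alpha> Iset Oset h0"
    using h hH backward_in_H runs_to_left_path_end_if_backward_reaches_root Iset_in_left_path_ends
    by blast
qed

end

theorem mainTheorem9:
  fixes H :: "'a set" and \<sigma> \<alpha> :: "'a \<Rightarrow> 'a" and h0 :: 'a and Iset Oset :: "'a set"
  assumes "is_map H \<sigma> \<alpha> h0"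
    and "is_orientation H \<alpha> Iset Oset"
  shows "left_connected \<sigma> \<alpha> Iset Oset h0 \<longleftrightarrow>
         (\<forall>h \<in> H. \<exists>q::nat. q > 0 \<and> (backward \<sigma> \<alpha> Oset ^^ q) h = h0)"
proof -
  interpret oriented_map H \<sigma> \<alpha> h0 Iset Oset
    using assms by unfold_locales
  show ?thesis
    using backward_reaches_root_if_left_connected left_connected_if_backward_reaches_root
    by blast
qed

end
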